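(* Let $\vdash\subseteq Sqt$ satisfy (A), (Mon), (Cut), (Com), ($\wedge$I), ($\wedge$E), ($\to$0), ($\to$1), ($\to$2). Let $\varphi\in Form$ and $\Gamma,\Delta\subseteq Form$ with $\Delta$ nonempty and closed under $\wedge$ (i.e. $\alpha,\beta\in\Delta\Rightarrow\alpha\wedge\beta\in\Delta$). Then $\Gamma(\Delta,\varphi)$ is $\vdash$-deduction closed, $\Delta\cup\{\varphi\}\subseteq\Gamma(\Delta,\varphi)$, and $\Gamma R_\to\Gamma(\Delta,\varphi)$. Moreover, if $\Gamma$ is $\vdash$-deduction closed, then $\Gamma(\Delta,\varphi)$ is the smallest set of formulas having these three properties (i.e. it is contained in every $\vdash$-deduction closed $\Phi$ with $\Delta\cup\{\varphi\}\subseteq\Phi$ and $\Gamma R_\to\Phi$). In particular (taking $\Delta=Thm=\{\psi:\vdash\psi\}$), for every $\Gamma$ and $\varphi$, $\Gamma(Thm,\varphi)$ is $\vdash$-deduction closed, contains $\varphi$, and $\Gamma R_\to\Gamma(Thm,\varphi)$.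
   Context: $Form$: $\varphi::=p\mid\bot\mid(\varphi\wedge\varphi)\mid(\varphi\to\varphi)$ over a countable set $P0$ ($\wedge$ left-associative, binds tighter than $\to$). Sequents are pairs $(\Gamma,\varphi)$, $\Gamma\subseteq Form$; $\Gamma\vdash\varphi$ means $(\Gamma,\varphi)\in\vdash$, $\psi\vdash\varphi$ means $\{\psi\}\vdash\varphi$, $\vdash\varphi$ means $\emptyset\vdash\varphi$. Rules (for all $\Gamma,\Delta\subseteq Form$, formulas): (A) $\Gamma\cup\{\varphi\}\vdash\varphi$; (Mon) $\Gamma\subseteq\Delta$, $\Gamma\vdash\varphi\Rightarrow\Delta\vdash\varphi$; (Cut) $\Gamma\cup\{\psi\}\vdash\varphi$, $\Delta\vdash\psi\Rightarrow\Gamma\cup\Delta\vdash\varphi$; (Com) $\Gamma\vdash\varphi\Rightarrow\Gamma'\vdash\varphi$ for some finite $\Gamma'\subseteq\Gamma$; ($\wedge$I) $\{\varphi,\psi\}\vdash\varphi\wedge\psi$; ($\wedge$E) $\varphi\wedge\psi\vdash\varphi$ and $\varphi\wedge\psi\vdash\psi$; ($\to$0) $\vdash\varphi\to\varphi$; ($\to$1) $\Gamma\vdash\varphi\Rightarrow\{\psi\to\chi:\chi\in\Gamma\}\vdash\psi\to\varphi$; ($\to$2) $\{\varphi\to\psi,\psi\to\chi\}\vdash\varphi\to\chi$. $\Gamma$ is $\vdash$-deduction closed iff $\Gamma\vdash\psi$ implies $\psi\in\Gamma$. For $\Gamma,\Delta\subseteq Form$: $\Gamma R_\to\Delta$ iff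 for all $\varphi,\psi$, $\varphi\to\psi\in\Gamma$ and $\varphi\in\Delta$ imply $\psi\in\Delta$. $\Gamma(\Delta,\varphi)=\{\psi\in Form:$ there is $\alpha\in\Delta$ with $\Gamma\vdash\alpha\wedge\varphi\to\psi\}$. *)

theory Defs
  imports "HOL-Library.Countable"
begin

datatype 'p form = Atom 'p | Bot | Conj "'p form" "'p form" | Imp "'p form" "'p form"

type_synonym 'p cons = "('p form set \<times> 'p form) set"

definition rule_A :: "'p cons \<Rightarrow> bool" where
  "rule_A D \<longleftrightarrow> (\<forall>G phi. (G \<union> {phi}, phi) \<in> D)"
definition rule_Mon :: "'p cons \<Rightarrow> bool" where
  "rule_Mon D \<longleftrightarrow> (\<forall>G H phi. G \<subseteq> H \<and> (G, phi) \<in> D \<longrightarrow> (H, phi) \<in> D)"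
definition rule_Cut :: "'p cons \<Rightarrow> bool" where
  "rule_Cut D \<longleftrightarrow> (\<forall>G H psi phi. (G \<union> {psi}, phi) \<in> D \<and> (H, psi) \<in> D \<longrightarrow> (G \<union> H, phi) \<in> D)"
definition rule_Com :: "'p cons \<Rightarrow> bool" where
  "rule_Com D \<longleftrightarrow> (\<forall>G phi. (G, phi) \<in> D \<longrightarrow> (\<exists>G'. finite G' \<and> G' \<subseteq> G \<and> (G', phi) \<in> D))"
definition rule_ConjI :: "'p cons \<Rightarrow> bool" where
  "rule_ConjI D \<longleftrightarrow> (\<forall>phi psi. ({phi, psi}, Conj phi psi) \<in> D)"
definition rule_ConjE :: "'p cons \<Rightarrow> bool" where
  "rule_ConjE D \<longleftrightarrow> (\<forall>phi psi. ({Conj phi psi}, phi) \<in> D \<and> ({Conj phi psi}, psi) \<in> D)"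
definition rule_Imp0 :: "'p cons \<Rightarrow> bool" where
  "rule_Imp0 D \<longleftrightarrow> (\<forall>phi. ({}, Imp phi phi) \<in> D)"
definition rule_Imp1 :: "'p cons \<Rightarrow> bool" where
  "rule_Imp1 D \<longleftrightarrow> (\<forall>G phi psi. (G, phi) \<in> D \<longrightarrow> ((\<lambda>chi. Imp psi chi) ` G, Imp psi phi) \<in> D)"
definition rule_Imp2 :: "'p cons \<Rightarrow> bool" where
  "rule_Imp2 D \<longleftrightarrow> (\<forall>phi psi chi. ({Imp phi psi, Imp psi chi}, Imp phi chi) \<in> D)"

definition all_rules :: "'p cons \<Rightarrow> bool" where
  "all_rules D \<longleftrightarrow> rule_A D \<and> rule_Mon D \<and> rule_Cut D \<and> rule_Com D \<and> rule_ConjI D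
     \<and> rule_ConjE D \<and> rule_Imp0 D \<and> rule_Imp1 D \<and> rule_Imp2 D"

definition ded_closed :: "'p cons \<Rightarrow> 'p form set \<Rightarrow> bool" where
  "ded_closed D G \<longleftrightarrow> (\<forall>psi. (G, psi) \<in> D \<longrightarrow> psi \<in> G)"

definition R_imp :: "'p form set \<Rightarrow> 'p form set \<Rightarrow> bool" where
  "R_imp G H \<longleftrightarrow> (\<forall>phi psi. Imp phi psi \<in> G \<and> phi \<in> H \<longrightarrow> psi \<in> H)"

text \<open>Gamma(Delta, phi) = {psi. exists alpha in Delta with Gamma |- alpha /\ phi -> psi}\<close>
definition ext :: "'p cons \<Rightarrow> 'p form set \<Rightarrow> 'p form set \<Rightarrow> 'p form \<Rightarrow> 'p form set" where
  "ext D G Del phi = {psi. \<exists>alpha\<in>Del. (G, Imp (Conj alpha phi) psi) \<in> D}"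

definition Thm :: "'p cons \<Rightarrow> 'p form set" where
  "Thm D = {psi. ({}, psi) \<in> D}"

end

theory Submission
  imports Defs
begin

text \<open>By compactness a deduction from \<open>\<Gamma>(\<Delta>,\<phi>)\<close> uses finitely many premises \<open>\<psi>\<^sub>i\<close>,
  each with a witness \<open>\<Gamma> \<turnstile> \<alpha>\<^sub>i \<and> \<phi> \<rightarrow> \<psi>\<^sub>i\<close>; since \<open>\<Delta>\<close> is closed under conjunction, one
  \<open>\<alpha> \<in> \<Delta>\<close> serves for all of them, and prefixing the deduction with \<open>\<alpha> \<and> \<phi>\<close> by rule
  (\<open>\<rightarrow>\<close>1) puts its conclusion back into \<open>\<Gamma>(\<Delta>,\<phi>)\<close>. Minimality: a deduction closed \<open>\<Phi>\<close>
  containing \<open>\<Delta> \<union> {\<phi>}\<close> contains each \<open>\<alpha> \<and> \<phi>\<close>, and \<open>\<Gamma> R\<^sub>\<rightarrow> \<Phi>\<close> carries it along the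
  implications \<open>\<alpha> \<and> \<phi> \<rightarrow> \<psi>\<close>, which lie in \<open>\<Gamma>\<close> when \<open>\<Gamma>\<close> is deduction closed.\<close>

locale consequence =
  fixes D :: "'p cons"
  assumes all_rules: "all_rules D"
begin

abbreviation derives :: "'p form set \<Rightarrow> 'p form \<Rightarrow> bool" (infix "\<turnstile>" 50)
  where "G \<turnstile> phi \<equiv> (G, phi) \<in> D"

lemma assumption: "G \<union> {phi} \<turnstile> phi"
  using all_rules unfolding all_rules_def rule_A_def by blast

lemma mono: "G \<turnstile> phi \<Longrightarrow> G \<subseteq> H \<Longrightarrow> H \<turnstile> phi"
  using all_rules unfolding all_rules_def rule_Mon_def by blast

lemma cut: "G \<union> {psi} \<turnstile> phi \<Longrightarrow> H \<turnstile> psi \<Longrightarrow> G \<union> H \<turnstile> phi"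
  using all_rules unfolding all_rules_def rule_Cut_def by blast

lemma compactness: "G \<turnstile> phi \<Longrightarrow> \<exists>G'. finite G' \<and> G' \<subseteq> G \<and> G' \<turnstile> phi"
  using all_rules unfolding all_rules_def rule_Com_def by blast

lemma conj_intro: "{phi, psi} \<turnstile> Conj phi psi"
  using all_rules unfolding all_rules_def rule_ConjI_def by blast

lemma conj_elim1: "{Conj phi psi} \<turnstile> phi"
  and conj_elim2: "{Conj phi psi} \<turnstile> psi"
  using all_rules unfolding all_rules_def rule_ConjE_def by blast+

lemma imp_refl: "{} \<turnstile> Imp phi phi"
  using all_rules unfolding all_rules_def rule_Imp0_def by blast

lemma imp_prefix: "G \<turnstile> phi \<Longrightarrow> Imp psi ` G \<turnstile> Imp psi phi"
  using all_rules unfolding all_rules_def rule_Imp1_def by blast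

lemma imp_chain: "{Imp phi psi, Imp psi chi} \<turnstile> Imp phi chi"
  using all_rules unfolding all_rules_def rule_Imp2_def by blast

lemma member_derivable: "phi \<in> G \<Longrightarrow> G \<turnstile> phi"
  using assumption[of G phi] by (simp add: insert_absorb)

lemma theorem_derivable: "{} \<turnstile> phi \<Longrightarrow> G \<turnstile> phi"
  using mono by blast

lemma cut_finite:
  assumes "finite S" and "\<forall>chi\<in>S. G \<turnstile> chi" and "H \<union> S \<turnstile> psi"
  shows "H \<union> G \<turnstile> psi"
  using assms
proof (induction S arbitrary: H rule: finite_induct)
  case empty
  then show ?case using mono by blast
next
  case (insert chi S)
  have "(H \<union> S) \<union> {chi} \<turnstile> psi" using insert.prems(2) by (simp add: Un_insert_right)
  then have "(H \<union> S) \<union> G \<turnstile> psi" using cut insert.prems(1) by blast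
  then have "(H \<union> G) \<union> S \<turnstile> psi" by (simp add: Un_ac)
  then have "(H \<union> G) \<union> G \<turnstile> psi" using insert.IH insert.prems(1) by blast
  then show ?case by (simp add: Un_ac)
qed

lemma derives_from_finite:
  "finite S \<Longrightarrow> \<forall>chi\<in>S. G \<turnstile> chi \<Longrightarrow> S \<turnstile> psi \<Longrightarrow> G \<turnstile> psi"
  using cut_finite[where H = "{}"] by simp

lemma deduction_single: "{phi} \<turnstile> psi \<Longrightarrow> {} \<turnstile> Imp phi psi"
  using imp_prefix[of "{phi}" psi phi] imp_refl[of phi]
  by (auto intro: derives_from_finite[of "{Imp phi phi}"])

lemma derives_trans_single: "{phi} \<turnstile> psi \<Longrightarrow> {psi} \<turnstile> chi \<Longrightarrow> {phi} \<turnstile> chi"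
  by (auto intro: derives_from_finite[of "{psi}"])

lemma conj_intro_single: "{chi} \<turnstile> phi \<Longrightarrow> {chi} \<turnstile> psi \<Longrightarrow> {chi} \<turnstile> Conj phi psi"
  using conj_intro by (auto intro: derives_from_finite[of "{phi, psi}"])

lemma imp_trans: "G \<turnstile> Imp phi psi \<Longrightarrow> G \<turnstile> Imp psi chi \<Longrightarrow> G \<turnstile> Imp phi chi"
  using imp_chain by (auto intro: derives_from_finite[of "{Imp phi psi, Imp psi chi}"])

lemma conj_strengthen_left: "G \<turnstile> Imp (Conj (Conj alpha beta) phi) (Conj alpha phi)"
proof -
  have "{Conj (Conj alpha beta) phi} \<turnstile> alpha"
    using derives_trans_single[OF conj_elim1 conj_elim1] .
  then have "{Conj (Conj alpha beta) phi} \<turnstile> Conj alpha phi"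
    using conj_intro_single conj_elim2 by blast
  then show ?thesis using theorem_derivable deduction_single by blast
qed

lemma conj_strengthen_right: "G \<turnstile> Imp (Conj (Conj alpha beta) phi) (Conj beta phi)"
proof -
  have "{Conj (Conj alpha beta) phi} \<turnstile> beta"
    using derives_trans_single[OF conj_elim1 conj_elim2] .
  then have "{Conj (Conj alpha beta) phi} \<turnstile> Conj beta phi"
    using conj_intro_single conj_elim2 by blast
  then show ?thesis using theorem_derivable deduction_single by blast
qed

lemma ext_common_antecedent:
  assumes "Del \<noteq> {}" and "\<forall>a\<in>Del. \<forall>b\<in>Del. Conj a b \<in> Del"
    and "finite S" and "S \<subseteq> ext D G Del phi"
  shows "\<exists>alpha\<in>Del. \<forall>psi\<in>S. G \<turnstile> Imp (Conj alpha phi) psi"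
  using assms(3,4)
proof (induction S rule: finite_induct)
  case empty
  then show ?case using assms(1) by auto
next
  case (insert psi S)
  then obtain alpha where alpha: "alpha \<in> Del" "\<forall>chi\<in>S. G \<turnstile> Imp (Conj alpha phi) chi"
    by auto
  obtain beta where beta: "beta \<in> Del" "G \<turnstile> Imp (Conj beta phi) psi"
    using insert.prems unfolding ext_def by auto
  have "Conj alpha beta \<in> Del" using assms(2) alpha(1) beta(1) by blast
  moreover have "\<forall>chi\<in>insert psi S. G \<turnstile> Imp (Conj (Conj alpha beta) phi) chi"
    using imp_trans[OF conj_strengthen_left] imp_trans[OF conj_strengthen_right] alpha beta
    by auto
  ultimately show ?case by blast
qed

lemma ext_ded_closed:
  assumes "Del \<noteq> {}" and "\<forall>a\<in>Del. \<forall>b\<in>Del. Conj a b \<in> Del"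
  shows "ded_closed D (ext D G Del phi)"
  unfolding ded_closed_def
proof (intro allI impI)
  fix psi assume "ext D G Del phi \<turnstile> psi"
  then obtain S where S: "finite S" "S \<subseteq> ext D G Del phi" "S \<turnstile> psi"
    using compactness by blast
  obtain alpha where alpha: "alpha \<in> Del" "\<forall>chi\<in>S. G \<turnstile> Imp (Conj alpha phi) chi"
    using ext_common_antecedent[OF assms S(1,2)] by blast
  have "Imp (Conj alpha phi) ` S \<turnstile> Imp (Conj alpha phi) psi"
    using imp_prefix[OF S(3)] .
  then have "G \<turnstile> Imp (Conj alpha phi) psi"
    using S(1) alpha(2) by (auto intro: derives_from_finite)
  then show "psi \<in> ext D G Del phi" using alpha(1) unfolding ext_def by auto
qed

lemma ext_contains:
  assumes "Del \<noteq> {}"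
  shows "Del \<union> {phi} \<subseteq> ext D G Del phi"
proof -
  have "Del \<subseteq> ext D G Del phi"
    using theorem_derivable[OF deduction_single[OF conj_elim1]] unfolding ext_def by blast
  moreover obtain alpha where "alpha \<in> Del" using assms by blast
  then have "phi \<in> ext D G Del phi"
    using theorem_derivable[OF deduction_single[OF conj_elim2]] unfolding ext_def by blast
  ultimately show ?thesis by blast
qed

lemma ext_R_imp: "R_imp G (ext D G Del phi)"
  unfolding R_imp_def ext_def
  using imp_trans member_derivable by blast

lemma ext_least:
  assumes "ded_closed D G"
    and "ded_closed D Phi" "Del \<union> {phi} \<subseteq> Phi" "R_imp G Phi"
  shows "ext D G Del phi \<subseteq> Phi"
proof
  fix psi assume "psi \<in> ext D G Del phi"
  then obtain alpha where alpha: "alpha \<in> Del" "G \<turnstile> Imp (Conj alpha phi) psi"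
    unfolding ext_def by auto
  have "Imp (Conj alpha phi) psi \<in> G" using assms(1) alpha(2) unfolding ded_closed_def by blast
  moreover have "Phi \<turnstile> Conj alpha phi" using mono[OF conj_intro] assms(3) alpha(1) by blast
  then have "Conj alpha phi \<in> Phi" using assms(2) unfolding ded_closed_def by blast
  ultimately show "psi \<in> Phi" using assms(4) unfolding R_imp_def by blast
qed

lemma Thm_nonempty: "Thm D \<noteq> {}"
  using imp_refl unfolding Thm_def by blast

lemma Thm_conj_closed: "\<forall>a\<in>Thm D. \<forall>b\<in>Thm D. Conj a b \<in> Thm D"
  unfolding Thm_def using conj_intro by (auto intro: derives_from_finite[of "{_, _}"])

end

theorem mainTheorem9:
  fixes D :: "('p::countable) cons"
  assumes "all_rules D"
  shows "(\<forall>(G :: 'p form set) Del phi.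
            Del \<noteq> {} \<and> (\<forall>a\<in>Del. \<forall>b\<in>Del. Conj a b \<in> Del) \<longrightarrow>
              ded_closed D (ext D G Del phi)
            \<and> Del \<union> {phi} \<subseteq> ext D G Del phi
            \<and> R_imp G (ext D G Del phi)
            \<and> (ded_closed D G \<longrightarrow>
                 (\<forall>Phi. ded_closed D Phi \<and> Del \<union> {phi} \<subseteq> Phi \<and> R_imp G Phi
                        \<longrightarrow> ext D G Del phi \<subseteq> Phi)))
       \<and> (\<forall>(G :: 'p form set) phi.
              ded_closed D (ext D G (Thm D) phi)
            \<and> phi \<in> ext D G (Thm D) phi
            \<and> R_imp G (ext D G (Thm D) phi))"
proof -
  interpret consequence D by (rule consequence.intro) (rule assms)
  show ?thesis
  proof (intro conjI allI impI)
    fix G Del :: "'p form set" and phi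
    assume Del: "Del \<noteq> {} \<and> (\<forall>a\<in>Del. \<forall>b\<in>Del. Conj a b \<in> Del)"
    show "ded_closed D (ext D G Del phi)" using ext_ded_closed Del by blast
    show "Del \<union> {phi} \<subseteq> ext D G Del phi" using ext_contains Del by blast
    show "R_imp G (ext D G Del phi)" by (rule ext_R_imp)
    show "ext D G Del phi \<subseteq> Phi"
      if "ded_closed D G" and "ded_closed D Phi \<and> Del \<union> {phi} \<subseteq> Phi \<and> R_imp G Phi" for Phi
      using ext_least that by blast
  next
    fix G :: "'p form set" and phi
    show "ded_closed D (ext D G (Thm D) phi)"
      by (rule ext_ded_closed[OF Thm_nonempty Thm_conj_closed])
    show "phi \<in> ext D G (Thm D) phi" using ext_contains[OF Thm_nonempty] by blast
    show "R_imp G (ext D G (Thm D) phi)" by (rule ext_R_imp)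
  qed
qed

end
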